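(* Let $p$ be a monic polynomial of degree $d$, let $\alpha\in\mathbb{C}$, and set $\tilde p(Z)=(Z-\alpha)p(Z)$. (1) For a point $\underline z=(z_1,\dots,z_d,\alpha)\in\mathbb{C}^{d+1}$ with pairwise distinct entries, the Jacobi matrix of $W_{\tilde p}$ at $\underline z$ has the block form $$DW_{\tilde p}(\underline z)=\begin{pmatrix} DW_p(\underline z') & *\\ 0_{1\times d} & \lambda\end{pmatrix},$$ where $\underline z'=(z_1,\dots,z_d)$, $*$ is some $d\times1$ column, and $\lambda=1-\dfrac{p(\alpha)}{\prod_{j=1}^d(\alpha-z_j)}$. (2) If $q\in\mathbb{C}^d$ is a periodic point of $W_p$ of period $n$ such that all eigenvalues of $D(W_p^{\circ n})(q)$ have absolute value strictly less than $1$, then for all $\alpha$ with $|\alpha|$ sufficiently large, $\tilde q=(q,\alpha)\in\mathbb{C}^{d+1}$ is a periodic point of $W_{\tilde p}$ of period $n$ and all eigenvalues of $D(W_{\tilde p}^{\circ n})(\tilde q)$ have absolute value strictly less than $1$.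
   Context: For a monic polynomial $p\in\mathbb{C}[Z]$ of degree $d$, the Weierstrass map $W_p$ is the partially defined map $\mathbb{C}^d\setminus\Delta\to\mathbb{C}^d$, $\underline z\mapsto \underline z'$ with $z'_k=z_k-\dfrac{p(z_k)}{\prod_{j\ne k}(z_k-z_j)}$, where $\Delta=\{\underline z\in\mathbb{C}^d: z_j=z_k\text{ for some }j<k\}$. *)

theory Defs
  imports "HOL-Analysis.Analysis" "HOL-Computational_Algebra.Polynomial"
begin

text \<open>Points of C^d are vectors complex^'n with d = CARD('n); the Weierstrass map
  is made total (division by zero gives 0 on the diagonal), which does not affect
  its values or derivatives off the closed set Delta.\<close>

definition weierstrass :: "complex poly \<Rightarrow> complex^'n::finite \<Rightarrow> complex^'n" where
  "weierstrass p z = (\<chi> k. z$k - poly p (z$k) / (\<Prod>j\<in>UNIV - {k}. z$k - z$j))"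

definition in_Delta :: "complex^'n::finite \<Rightarrow> bool" where
  "in_Delta z \<longleftrightarrow> (\<exists>j k. j \<noteq> k \<and> z$j = z$k)"

definition is_eigenvalue :: "complex^'n^'n \<Rightarrow> complex \<Rightarrow> bool" where
  "is_eigenvalue A \<mu> \<longleftrightarrow> (\<exists>v. v \<noteq> 0 \<and> A *v v = \<mu> *s v)"

text \<open>q is a periodic point of W_p of (exact) period n: all orbit points lie off Delta
  (so the partially defined map can be iterated), W_p^n(q) = q, and n is minimal.\<close>
definition periodic_point :: "complex poly \<Rightarrow> complex^'n::finite \<Rightarrow> nat \<Rightarrow> bool" where
  "periodic_point p q n \<longleftrightarrow> n > 0 \<and> (\<forall>m<n. \<not> in_Delta ((weierstrass p ^^ m) q))
     \<and> (weierstrass p ^^ n) q = q \<and> (\<forall>m. 0 < m \<and> m < n \<longrightarrow> (weierstrass p ^^ m) q \<noteq> q)"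

definition extend_pt :: "complex^'n \<Rightarrow> complex \<Rightarrow> complex^('n option)" where
  "extend_pt q a = (\<chi> i. case i of Some k \<Rightarrow> q$k | None \<Rightarrow> a)"

definition restrict_pt :: "complex^('n option) \<Rightarrow> complex^'n" where
  "restrict_pt z = (\<chi> k. z $ Some k)"

end

theory Submission
  imports Defs
begin

text \<open>Write \<open>p' = (Z - \<alpha>) p\<close> and let the coordinate \<open>None\<close> carry the new root.
  The \<open>k\<close>-th coordinate of \<open>W\<^sub>p\<^sub>'\<close> is \<open>z\<^sub>k - \<rho>\<^sub>k(z) (z\<^sub>k - W\<^sub>p(z')\<^sub>k)\<close> with
  \<open>\<rho>\<^sub>k(z) = (z\<^sub>k - \<alpha>) / (z\<^sub>k - z\<^sub>0)\<close>, writing \<open>z\<^sub>0\<close> for the coordinate \<open>None\<close>, and the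
  last one is \<open>z\<^sub>0 - (z\<^sub>0 - \<alpha>) p(z\<^sub>0) / \<Prod>\<^sub>j (z\<^sub>0 - z\<^sub>j)\<close>. On the hyperplane \<open>z\<^sub>0 = \<alpha>\<close>
  we have \<open>\<rho>\<^sub>k = 1\<close> and the factor \<open>z\<^sub>0 - \<alpha>\<close> vanishes, so the hyperplane is invariant,
  \<open>W\<^sub>p\<^sub>'\<close> restricts to \<open>W\<^sub>p\<close> on it, and differentiating gives the block triangular
  Jacobian of part (1). If \<open>\<alpha>\<close> avoids the coordinates of the orbit of \<open>q\<close>, then
  \<open>(q, \<alpha>)\<close> is periodic of the same period, and by the chain rule \<open>D(W\<^sub>p\<^sub>'\<^sup>n)(q, \<alpha>)\<close> is
  block triangular with diagonal blocks \<open>D(W\<^sub>p\<^sup>n)(q)\<close> and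
  \<open>\<Prod>\<^sub>m (1 - p(\<alpha>) / \<Prod>\<^sub>j (\<alpha> - W\<^sub>p\<^sup>m(q)\<^sub>j))\<close>. Since \<open>p\<close> is monic of degree \<open>d\<close>, each
  factor of this product tends to \<open>0\<close> as \<open>|\<alpha>| \<rightarrow> \<infinity>\<close>, so eventually the new eigenvalue
  lies in the unit disc too.\<close>

lemma has_derivative_vec_lambda:
  fixes f :: "'a::real_normed_vector \<Rightarrow> 'b::euclidean_space^'n::finite"
  assumes "\<And>i. ((\<lambda>x. f x $ i) has_derivative (\<lambda>h. f' h $ i)) (at a within S)"
  shows "(f has_derivative f') (at a within S)"
proof -
  have "((\<lambda>x. f x \<bullet> b) has_derivative (\<lambda>x. f' x \<bullet> b)) (at a within S)" if "b \<in> Basis" for b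
  proof -
    from that obtain i c where b: "b = axis i c" and "c \<in> Basis"
      by (auto simp: Basis_vec_def)
    have "((\<lambda>x. f x $ i \<bullet> c) has_derivative (\<lambda>x. f' x $ i \<bullet> c)) (at a within S)"
      using bounded_linear.has_derivative[OF bounded_linear_inner_left assms[of i]] .
    then show ?thesis by (simp add: b inner_axis)
  qed
  then show ?thesis
    using has_derivative_componentwise_within by blast
qed

lemma has_derivative_vec_nth [derivative_intros]:
  "(f has_derivative f') F \<Longrightarrow> ((\<lambda>x. f x $ i) has_derivative (\<lambda>h. f' h $ i)) F"
  by (rule bounded_linear.has_derivative[OF bounded_linear_vec_nth])

lemma has_derivative_poly [derivative_intros]:
  fixes f :: "'a::real_normed_vector \<Rightarrow> 'b::real_normed_field"
  assumes "(f has_derivative f') (at x)"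
  shows "((\<lambda>y. poly p (f y)) has_derivative (\<lambda>h. poly (pderiv p) (f x) * f' h)) (at x)"
  using diff_chain_at[OF assms poly_DERIV[of p "f x", unfolded has_field_derivative_def]]
  by (simp add: o_def)

lemma poly_divide_prod_tendsto_1:
  fixes p :: "'a::real_normed_field poly" and w :: "'b \<Rightarrow> 'a"
  assumes "lead_coeff p = 1" "degree p = card A" "finite A"
  shows "((\<lambda>x. poly p x / (\<Prod>j\<in>A. x - w j)) \<longlongrightarrow> 1) at_infinity"
proof -
  have "((\<lambda>x. poly p x / x ^ card A) \<longlongrightarrow> 1) at_infinity"
    using poly_divide_tendsto_aux[of p] assms by simp
  moreover have "((\<lambda>x. \<Prod>j\<in>A. 1 - w j * inverse x) \<longlongrightarrow> (\<Prod>j\<in>A. 1 - w j * 0)) at_infinity"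
    by (intro tendsto_intros tendsto_inverse_0)
  ultimately have "((\<lambda>x. poly p x / x ^ card A / (\<Prod>j\<in>A. 1 - w j * inverse x)) \<longlongrightarrow> 1) at_infinity"
    using tendsto_divide[where b = 1] by fastforce
  moreover have "eventually (\<lambda>x. poly p x / x ^ card A / (\<Prod>j\<in>A. 1 - w j * inverse x)
      = poly p x / (\<Prod>j\<in>A. x - w j)) at_infinity"
  proof (rule eventually_at_infinityI[of 1])
    fix x :: 'a assume "1 \<le> norm x"
    then have "x \<noteq> 0" by auto
    then have "(\<Prod>j\<in>A. x - w j) = (\<Prod>j\<in>A. x * (1 - w j * inverse x))"
      by (intro prod.cong) (simp_all add: field_simps)
    then show "poly p x / x ^ card A / (\<Prod>j\<in>A. 1 - w j * inverse x) = poly p x / (\<Prod>j\<in>A. x - w j)"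
      by (simp add: prod.distrib)
  qed
  ultimately show ?thesis by (rule Lim_transform_eventually)
qed

subsection \<open>Vectors indexed by \<open>'n option\<close>\<close>

lemma extend_pt_nth [simp]:
  "extend_pt v c $ Some k = v $ k" "extend_pt v c $ None = c"
  by (simp_all add: extend_pt_def)

lemma restrict_pt_nth [simp]: "restrict_pt w $ k = w $ Some k"
  by (simp add: restrict_pt_def)

lemma restrict_extend_pt [simp]: "restrict_pt (extend_pt v c) = v"
  by (simp add: vec_eq_iff)

lemma extend_restrict_pt: "extend_pt (restrict_pt w) (w $ None) = w"
  unfolding vec_eq_iff by (metis extend_pt_nth option.exhaust restrict_pt_nth)

lemma restrict_pt_axis_Some: "restrict_pt (axis (Some j) 1) = axis j 1"
  by (simp add: vec_eq_iff axis_def)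

lemma sum_UNIV_option:
  "(\<Sum>i\<in>(UNIV::'n::finite option set). f i) = f None + (\<Sum>k\<in>UNIV. f (Some k))"
  by (simp add: UNIV_option_conv sum.reindex)

lemma prod_UNIV_option_minus_Some:
  "(\<Prod>j\<in>(UNIV::'n::finite option set) - {Some k}. f j) = f None * (\<Prod>j\<in>UNIV - {k}. f (Some j))"
proof -
  have "(UNIV::'n option set) - {Some k} = insert None (Some ` (UNIV - {k}))"
    by (auto simp: UNIV_option_conv)
  then show ?thesis by (simp add: prod.reindex)
qed

lemma prod_UNIV_option_minus_None:
  "(\<Prod>j\<in>(UNIV::'n::finite option set) - {None}. f j) = (\<Prod>j\<in>UNIV. f (Some j))"
proof -
  have "(UNIV::'n option set) - {None} = Some ` UNIV"
    by (auto simp: UNIV_option_conv)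
  then show ?thesis by (simp add: prod.reindex)
qed

lemma not_in_Delta_restrict_pt: "\<not> in_Delta z \<Longrightarrow> \<not> in_Delta (restrict_pt z)"
  by (simp add: in_Delta_def) (metis option.inject)

lemma not_in_Delta_extend_pt:
  fixes w :: "complex^'n::finite"
  assumes "\<not> in_Delta w" "\<forall>k. w $ k \<noteq> \<alpha>"
  shows "\<not> in_Delta (extend_pt w \<alpha>)"
  unfolding in_Delta_def
proof (intro notI, elim exE conjE)
  fix j k :: "'n option"
  assume "j \<noteq> k" "extend_pt w \<alpha> $ j = extend_pt w \<alpha> $ k"
  then show False using assms
    by (cases j; cases k) (auto simp: in_Delta_def)
qed

subsection \<open>Block triangular linear maps\<close>

text \<open>\<open>F\<close> has the matrix \<open>(L, M; 0, c)\<close> with respect to \<open>C\<^sup>d \<times> C\<close>; the column \<open>M\<close> is the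
  unspecified \<open>*\<close> of the paper and is not required to be linear.\<close>
definition block_triangular ::
    "(complex^'n \<Rightarrow> complex^'n) \<Rightarrow> complex \<Rightarrow> (complex^'n option \<Rightarrow> complex^'n option) \<Rightarrow> bool"
  where "block_triangular L c F \<longleftrightarrow>
    (\<exists>M. M 0 = 0 \<and> (\<forall>e. F e = extend_pt (L (restrict_pt e) + M (e $ None)) (e $ None * c)))"

lemma block_triangular_id: "block_triangular id 1 id"
  unfolding block_triangular_def
  by (rule exI[of _ "\<lambda>_. 0"]) (simp add: extend_restrict_pt)

lemma block_triangular_comp:
  assumes "block_triangular L c F" "block_triangular L' c' F'" "bounded_linear L'"
  shows "block_triangular (L' \<circ> L) (c * c') (F' \<circ> F)"
proof -
  interpret L': bounded_linear L' by fact
  obtain M where M: "M 0 = 0" "\<And>e. F e = extend_pt (L (restrict_pt e) + M (e $ None)) (e $ None * c)"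
    using assms(1) unfolding block_triangular_def by blast
  obtain M' where M': "M' 0 = 0" "\<And>e. F' e = extend_pt (L' (restrict_pt e) + M' (e $ None)) (e $ None * c')"
    using assms(2) unfolding block_triangular_def by blast
  show ?thesis
    unfolding block_triangular_def
    by (rule exI[of _ "\<lambda>t. L' (M t) + M' (t * c)"]) (simp add: M M' L'.add ac_simps)
qed

lemma jacobian_block_triangular:
  assumes "(f has_derivative F) (at x)" "(g has_derivative L) (at y)" "block_triangular L c F"
  shows "(\<forall>i k. jacobian f (at x) $ Some i $ Some k = jacobian g (at y) $ i $ k) \<and>
    (\<forall>j. jacobian f (at x) $ None $ Some j = 0) \<and> jacobian f (at x) $ None $ None = c"
proof -
  obtain M where "M 0 = 0" "\<And>e. F e = extend_pt (L (restrict_pt e) + M (e $ None)) (e $ None * c)"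
    using assms(3) unfolding block_triangular_def by blast
  then show ?thesis
    using frechet_derivative_at[OF assms(1)] frechet_derivative_at[OF assms(2)]
    by (simp add: jacobian_def matrix_def restrict_pt_axis_Some) (simp add: axis_def)
qed

lemma is_eigenvalue_block_triangular:
  fixes J :: "complex^('n::finite option)^('n option)" and A :: "complex^'n^'n"
  assumes "\<forall>i k. J $ Some i $ Some k = A $ i $ k" "\<forall>j. J $ None $ Some j = 0"
    and "is_eigenvalue J \<mu>"
  shows "is_eigenvalue A \<mu> \<or> \<mu> = J $ None $ None"
proof -
  from assms(3) obtain v where "v \<noteq> 0" and Jv: "J *v v = \<mu> *s v"
    unfolding is_eigenvalue_def by blast
  have "(J *v v) $ None = \<mu> * v $ None" using Jv by simp
  then have "J $ None $ None * v $ None = \<mu> * v $ None"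
    using assms(2) by (simp add: matrix_vector_mult_def sum_UNIV_option)
  moreover have "is_eigenvalue A \<mu>" if vN: "v $ None = 0"
  proof -
    have "restrict_pt v \<noteq> 0"
    proof
      assume "restrict_pt v = 0"
      then have "v $ i = 0" for i using vN by (cases i) (auto simp: vec_eq_iff)
      then show False using \<open>v \<noteq> 0\<close> by (simp add: vec_eq_iff)
    qed
    moreover have "(A *v restrict_pt v) $ i = (\<mu> *s restrict_pt v) $ i" for i
    proof -
      have "(J *v v) $ Some i = \<mu> * v $ Some i" using Jv by simp
      then show ?thesis using that assms(1) by (simp add: matrix_vector_mult_def sum_UNIV_option)
    qed
    ultimately show ?thesis unfolding is_eigenvalue_def vec_eq_iff by blast
  qed
  ultimately show ?thesis by auto
qed

subsection \<open>The Weierstrass map of \<open>(Z - \<alpha>) p\<close>\<close>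

text \<open>Otherwise the simplifier expands \<open>[:-\<alpha>, 1:] * p\<close> and the lemmas below stop matching.\<close>
declare mult_pCons_left [simp del]

lemma weierstrass_differentiable:
  assumes "\<not> in_Delta z"
  shows "weierstrass p differentiable (at z)"
proof -
  have nz: "(\<Prod>j\<in>UNIV - {k}. z $ k - z $ j) \<noteq> 0" for k
    using assms by (auto simp: in_Delta_def) metis
  have "\<exists>D. ((\<lambda>x. weierstrass p x $ k) has_derivative D) (at z)" for k
    unfolding weierstrass_def vec_lambda_beta
    by (rule exI, (rule derivative_intros)+) (fact nz)
  then obtain D where "\<And>k. ((\<lambda>x. weierstrass p x $ k) has_derivative D k) (at z)"
    by metis
  then have "(weierstrass p has_derivative (\<lambda>h. \<chi> k. D k h)) (at z)"
    by (intro has_derivative_vec_lambda) simp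
  then show ?thesis unfolding differentiable_def by blast
qed

lemma weierstrass_linear_factor_Some:
  "weierstrass ([:-\<alpha>, 1:] * p) w $ Some k =
    w $ Some k - (w $ Some k - \<alpha>) / (w $ Some k - w $ None) * (w $ Some k - weierstrass p (restrict_pt w) $ k)"
  by (simp add: weierstrass_def prod_UNIV_option_minus_Some algebra_simps)

lemma weierstrass_linear_factor_None:
  "weierstrass ([:-\<alpha>, 1:] * p) w $ None =
    w $ None - (w $ None - \<alpha>) * (poly p (w $ None) / (\<Prod>j\<in>UNIV. w $ None - w $ Some j))"
  by (simp add: weierstrass_def prod_UNIV_option_minus_None algebra_simps)

lemma restrict_pt_has_derivative: "(restrict_pt has_derivative restrict_pt) (at z)"
  by (rule has_derivative_vec_lambda) (simp add: derivative_intros)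

lemma weierstrass_linear_factor_None_has_derivative:
  fixes z :: "complex^('n::finite option)"
  assumes zN: "z $ None = \<alpha>" and nD: "\<not> in_Delta z"
  shows "((\<lambda>x. weierstrass ([:-\<alpha>, 1:] * p) x $ None) has_derivative
    (\<lambda>h. h $ None * (1 - poly p \<alpha> / (\<Prod>j\<in>UNIV. \<alpha> - z $ Some j)))) (at z)"
proof -
  define G where "G x = poly p (x $ None) / (\<Prod>j\<in>UNIV. x $ None - x $ Some j)"
    for x :: "complex^'n option"
  have nz: "(\<Prod>j\<in>UNIV. z $ None - z $ Some j) \<noteq> 0"
    using nD by (auto simp: in_Delta_def)
  have "\<exists>G'. (G has_derivative G') (at z)"
    unfolding G_def[abs_def] by (rule exI, (rule derivative_intros)+) (fact nz)
  then obtain G' where G': "(G has_derivative G') (at z)" by blast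
  have "((\<lambda>x. x $ None - \<alpha>) has_derivative (\<lambda>h. h $ None)) (at z)"
    by (auto intro!: derivative_eq_intros)
  then have "((\<lambda>x. x $ None - (x $ None - \<alpha>) * G x) has_derivative
      (\<lambda>h. h $ None - ((z $ None - \<alpha>) * G' h + h $ None * G z))) (at z)"
    by (intro has_derivative_diff has_derivative_mult G' derivative_intros)
  then show ?thesis
    unfolding weierstrass_linear_factor_None G_def[symmetric]
    by (simp add: G_def zN right_diff_distrib)
qed

lemma weierstrass_linear_factor_Some_has_derivative:
  fixes z :: "complex^('n::finite option)"
  assumes zN: "z $ None = \<alpha>" and nD: "\<not> in_Delta z"
    and D: "(weierstrass p has_derivative D) (at (restrict_pt z))"
  shows "((\<lambda>x. weierstrass ([:-\<alpha>, 1:] * p) x $ Some k) has_derivative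
    (\<lambda>h. D (restrict_pt h) $ k
       - h $ None * ((z $ Some k - weierstrass p (restrict_pt z) $ k) / (z $ Some k - \<alpha>)))) (at z)"
proof -
  have WD: "((\<lambda>x. weierstrass p (restrict_pt x)) has_derivative (\<lambda>h. D (restrict_pt h))) (at z)"
    using diff_chain_at[OF restrict_pt_has_derivative D] by (simp add: o_def)
  have nz: "z $ Some k - \<alpha> \<noteq> 0"
    using nD zN by (auto simp: in_Delta_def)
  define \<rho> where "\<rho> x = (x $ Some k - \<alpha>) / (x $ Some k - x $ None)" for x :: "complex^'n option"
  have quotient_rule: "(a * c - c * (a - b)) / (c * c) = b / c" for a b c :: complex
    by (cases "c = 0") (simp_all add: field_simps)
  have \<rho>: "(\<rho> has_derivative (\<lambda>h. h $ None / (z $ Some k - \<alpha>))) (at z)"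
    unfolding \<rho>_def[abs_def]
    by (rule has_derivative_eq_rhs[OF has_derivative_divide'], (rule derivative_intros)+)
      (use nz in \<open>simp_all add: zN quotient_rule\<close>)
  have "((\<lambda>x. x $ Some k - \<rho> x * (x $ Some k - weierstrass p (restrict_pt x) $ k)) has_derivative
      (\<lambda>h. h $ Some k - (\<rho> z * (h $ Some k - D (restrict_pt h) $ k)
        + h $ None / (z $ Some k - \<alpha>) * (z $ Some k - weierstrass p (restrict_pt z) $ k)))) (at z)"
    by (intro has_derivative_diff has_derivative_mult \<rho> has_derivative_vec_nth[OF WD] derivative_intros)
  moreover have "\<rho> z = 1"
    using nz zN by (simp add: \<rho>_def)
  ultimately show ?thesis
    unfolding weierstrass_linear_factor_Some \<rho>_def[symmetric] by simp
qed

lemma weierstrass_linear_factor_has_derivative: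
  fixes z :: "complex^('n::finite option)"
  assumes "z $ None = \<alpha>" and nD: "\<not> in_Delta z"
  shows "\<exists>F. (weierstrass ([:-\<alpha>, 1:] * p) has_derivative F) (at z) \<and>
    block_triangular (frechet_derivative (weierstrass p) (at (restrict_pt z)))
      (1 - poly p \<alpha> / (\<Prod>j\<in>UNIV. \<alpha> - z $ Some j)) F"
proof -
  define D where "D = frechet_derivative (weierstrass p) (at (restrict_pt z))"
  define V where "V = (\<chi> k. (z $ Some k - weierstrass p (restrict_pt z) $ k) / (z $ Some k - \<alpha>))"
  define c where "c = 1 - poly p \<alpha> / (\<Prod>j\<in>UNIV. \<alpha> - z $ Some j)"
  define F where "F e = extend_pt (D (restrict_pt e) - e $ None *s V) (e $ None * c)" for e
  have "(weierstrass p has_derivative D) (at (restrict_pt z))"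
    unfolding D_def using weierstrass_differentiable[OF not_in_Delta_restrict_pt[OF nD]]
    by (simp add: frechet_derivative_works)
  then have "((\<lambda>x. weierstrass ([:-\<alpha>, 1:] * p) x $ i) has_derivative (\<lambda>h. F h $ i)) (at z)" for i
    using weierstrass_linear_factor_None_has_derivative[OF assms]
      weierstrass_linear_factor_Some_has_derivative[OF assms]
    by (cases i) (simp_all add: F_def V_def c_def)
  moreover have "block_triangular D c F"
    unfolding block_triangular_def F_def by (rule exI[of _ "\<lambda>t. - t *s V"]) simp
  ultimately show ?thesis
    by (auto intro!: has_derivative_vec_lambda simp: D_def c_def)
qed

lemma jacobian_weierstrass_linear_factor:
  fixes z :: "complex^('n::finite option)"
  assumes "z $ None = \<alpha>" "\<not> in_Delta z"
  shows "weierstrass ([:-\<alpha>, 1:] * p) differentiable (at z) \<and>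
    weierstrass p differentiable (at (restrict_pt z)) \<and>
    (\<forall>i j. jacobian (weierstrass ([:-\<alpha>, 1:] * p)) (at z) $ Some i $ Some j
       = jacobian (weierstrass p) (at (restrict_pt z)) $ i $ j) \<and>
    (\<forall>j. jacobian (weierstrass ([:-\<alpha>, 1:] * p)) (at z) $ None $ Some j = 0) \<and>
    jacobian (weierstrass ([:-\<alpha>, 1:] * p)) (at z) $ None $ None
      = 1 - poly p \<alpha> / (\<Prod>j\<in>UNIV. \<alpha> - z $ Some j)"
proof -
  obtain F where F: "(weierstrass ([:-\<alpha>, 1:] * p) has_derivative F) (at z)"
    and "block_triangular (frechet_derivative (weierstrass p) (at (restrict_pt z)))
      (1 - poly p \<alpha> / (\<Prod>j\<in>UNIV. \<alpha> - z $ Some j)) F"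
    using weierstrass_linear_factor_has_derivative[OF assms] by blast
  moreover have W: "weierstrass p differentiable (at (restrict_pt z))"
    using weierstrass_differentiable[OF not_in_Delta_restrict_pt[OF assms(2)]] .
  ultimately show ?thesis
    using jacobian_block_triangular[OF F W[unfolded frechet_derivative_works]]
    by (auto simp: differentiable_def)
qed

subsection \<open>Periodic points for large \<open>\<alpha>\<close>\<close>

lemma weierstrass_linear_factor_extend_pt:
  assumes "\<forall>k. w $ k \<noteq> \<alpha>"
  shows "weierstrass ([:-\<alpha>, 1:] * p) (extend_pt w \<alpha>) = extend_pt (weierstrass p w) \<alpha>"
proof -
  have "weierstrass ([:-\<alpha>, 1:] * p) (extend_pt w \<alpha>) $ i = extend_pt (weierstrass p w) \<alpha> $ i" for i
    using assms
    by (cases i) (simp_all add: weierstrass_linear_factor_None weierstrass_linear_factor_Some)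
  then show ?thesis by (simp add: vec_eq_iff)
qed

lemma funpow_weierstrass_linear_factor_extend_pt:
  assumes "\<forall>m<N. \<forall>k. (weierstrass p ^^ m) q $ k \<noteq> \<alpha>" "m \<le> N"
  shows "(weierstrass ([:-\<alpha>, 1:] * p) ^^ m) (extend_pt q \<alpha>) = extend_pt ((weierstrass p ^^ m) q) \<alpha>"
  using assms(2)
  by (induction m) (simp_all add: assms(1) weierstrass_linear_factor_extend_pt)

lemma periodic_point_extend_pt:
  assumes "periodic_point p q n" "\<forall>m<n. \<forall>k. (weierstrass p ^^ m) q $ k \<noteq> \<alpha>"
  shows "periodic_point ([:-\<alpha>, 1:] * p) (extend_pt q \<alpha>) n"
proof -
  note orbit = funpow_weierstrass_linear_factor_extend_pt[OF assms(2)]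
  have "extend_pt v \<alpha> = extend_pt q \<alpha> \<longleftrightarrow> v = q" for v :: "complex^'a"
    by (metis restrict_extend_pt)
  with assms show ?thesis
    unfolding periodic_point_def by (simp add: orbit not_in_Delta_extend_pt)
qed

lemma funpow_weierstrass_linear_factor_has_derivative:
  fixes q :: "complex^'n::finite"
  assumes "\<forall>m<N. \<not> in_Delta ((weierstrass p ^^ m) q)"
    and "\<forall>m<N. \<forall>k. (weierstrass p ^^ m) q $ k \<noteq> \<alpha>"
  shows "\<exists>L F. (weierstrass p ^^ N has_derivative L) (at q) \<and>
    (weierstrass ([:-\<alpha>, 1:] * p) ^^ N has_derivative F) (at (extend_pt q \<alpha>)) \<and>
    block_triangular L (\<Prod>m<N. 1 - poly p \<alpha> / (\<Prod>j\<in>UNIV. \<alpha> - (weierstrass p ^^ m) q $ j)) F"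
  using assms
proof (induction N)
  case 0
  show ?case
    using block_triangular_id by (auto simp: id_def intro!: exI[of _ id] has_derivative_ident)
next
  case (Suc N)
  then obtain L F where L: "(weierstrass p ^^ N has_derivative L) (at q)"
    and F: "(weierstrass ([:-\<alpha>, 1:] * p) ^^ N has_derivative F) (at (extend_pt q \<alpha>))"
    and LF: "block_triangular L (\<Prod>m<N. 1 - poly p \<alpha> / (\<Prod>j\<in>UNIV. \<alpha> - (weierstrass p ^^ m) q $ j)) F"
    by auto
  define w where "w = (weierstrass p ^^ N) q"
  have "\<not> in_Delta w" "\<forall>k. w $ k \<noteq> \<alpha>"
    using Suc.prems by (auto simp: w_def)
  then have z: "extend_pt w \<alpha> $ None = \<alpha>" "\<not> in_Delta (extend_pt w \<alpha>)"
    by (simp_all add: not_in_Delta_extend_pt)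
  have orbit: "(weierstrass ([:-\<alpha>, 1:] * p) ^^ N) (extend_pt q \<alpha>) = extend_pt w \<alpha>"
    using funpow_weierstrass_linear_factor_extend_pt[of N p q \<alpha> N] Suc.prems by (simp add: w_def)
  define D where "D = frechet_derivative (weierstrass p) (at w)"
  have D: "(weierstrass p has_derivative D) (at w)"
    unfolding D_def using weierstrass_differentiable[OF \<open>\<not> in_Delta w\<close>]
    by (simp add: frechet_derivative_works)
  obtain F' where F': "(weierstrass ([:-\<alpha>, 1:] * p) has_derivative F') (at (extend_pt w \<alpha>))"
    and DF': "block_triangular D (1 - poly p \<alpha> / (\<Prod>j\<in>UNIV. \<alpha> - w $ j)) F'"
    using weierstrass_linear_factor_has_derivative[OF z, of p] by (auto simp: D_def)
  have "block_triangular (D \<circ> L) (\<Prod>m<Suc N. 1 - poly p \<alpha> / (\<Prod>j\<in>UNIV. \<alpha> - (weierstrass p ^^ m) q $ j)) (F' \<circ> F)"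
    using block_triangular_comp[OF LF DF' has_derivative_bounded_linear[OF D]] by (simp add: w_def)
  moreover have "(weierstrass p ^^ Suc N has_derivative D \<circ> L) (at q)"
    using diff_chain_at[OF L] D by (simp add: w_def)
  moreover have "(weierstrass ([:-\<alpha>, 1:] * p) ^^ Suc N has_derivative F' \<circ> F) (at (extend_pt q \<alpha>))"
    using diff_chain_at[OF F] F' orbit by simp
  ultimately show ?case by blast
qed

lemma eventually_attracting_periodic_point_extend_pt:
  fixes p :: "complex poly" and q :: "complex^'n::finite"
  assumes monic: "lead_coeff p = 1" and deg: "degree p = CARD('n)"
    and periodic: "periodic_point p q n"
    and attracting: "\<forall>\<mu>. is_eigenvalue (jacobian (weierstrass p ^^ n) (at q)) \<mu> \<longrightarrow> norm \<mu> < 1"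
  shows "eventually (\<lambda>\<alpha>. periodic_point ([:-\<alpha>, 1:] * p) (extend_pt q \<alpha>) n \<and>
    (weierstrass ([:-\<alpha>, 1:] * p) ^^ n) differentiable (at (extend_pt q \<alpha>)) \<and>
    (\<forall>\<mu>. is_eigenvalue (jacobian (weierstrass ([:-\<alpha>, 1:] * p) ^^ n) (at (extend_pt q \<alpha>))) \<mu>
       \<longrightarrow> norm \<mu> < 1)) at_infinity"
proof -
  let ?o = "\<lambda>m. (weierstrass p ^^ m) q"
  define c where "c \<alpha> = (\<Prod>m<n. 1 - poly p \<alpha> / (\<Prod>j\<in>UNIV. \<alpha> - ?o m $ j))" for \<alpha>
  from periodic have "n > 0" and off_Delta: "\<forall>m<n. \<not> in_Delta (?o m)"
    unfolding periodic_point_def by auto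
  have "(c \<longlongrightarrow> (\<Prod>m<n. 1 - 1)) at_infinity"
    unfolding c_def[abs_def] by (intro tendsto_intros poly_divide_prod_tendsto_1) (use monic deg in auto)
  then have "((\<lambda>\<alpha>. norm (c \<alpha>)) \<longlongrightarrow> 0) at_infinity"
    using \<open>n > 0\<close> by (simp add: tendsto_norm_zero zero_power)
  then have small: "eventually (\<lambda>\<alpha>. norm (c \<alpha>) < 1) at_infinity"
    by (rule order_tendstoD) simp
  have far: "eventually (\<lambda>\<alpha>. v \<noteq> \<alpha>) at_infinity" for v :: complex
    by (rule eventually_at_infinityI[of "norm v + 1"]) auto
  have "eventually (\<lambda>\<alpha>. \<forall>m\<in>{..<n}. \<forall>k. ?o m $ k \<noteq> \<alpha>) at_infinity"
    by (intro eventually_ball_finite ballI eventually_all_finite far) simp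
  with small show ?thesis
  proof eventually_elim
    case (elim \<alpha>)
    then have off_orbit: "\<forall>m<n. \<forall>k. ?o m $ k \<noteq> \<alpha>" by simp
    obtain L F where L: "(weierstrass p ^^ n has_derivative L) (at q)"
      and F: "(weierstrass ([:-\<alpha>, 1:] * p) ^^ n has_derivative F) (at (extend_pt q \<alpha>))"
      and LF: "block_triangular L (c \<alpha>) F"
      using funpow_weierstrass_linear_factor_has_derivative[OF off_Delta off_orbit] by (auto simp: c_def)
    note J = jacobian_block_triangular[OF F L LF]
    have "norm \<mu> < 1"
      if "is_eigenvalue (jacobian (weierstrass ([:-\<alpha>, 1:] * p) ^^ n) (at (extend_pt q \<alpha>))) \<mu>" for \<mu>
      using is_eigenvalue_block_triangular[OF _ _ that] J attracting elim by auto
    then show ?case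
      using periodic_point_extend_pt[OF periodic off_orbit] F by (auto simp: differentiable_def)
  qed
qed

theorem lemma3p6:
  fixes p :: "complex poly"
  assumes monic: "lead_coeff p = 1" and deg: "degree p = CARD('n::finite)"
  shows
   "(\<forall>(\<alpha>::complex) (z::complex^('n option)).
       z $ None = \<alpha> \<and> \<not> in_Delta z \<longrightarrow>
       weierstrass ([:-\<alpha>, 1:] * p) differentiable (at z) \<and>
       weierstrass p differentiable (at (restrict_pt z)) \<and>
       (\<forall>i j. jacobian (weierstrass ([:-\<alpha>, 1:] * p)) (at z) $ Some i $ Some j
               = jacobian (weierstrass p) (at (restrict_pt z)) $ i $ j) \<and>
       (\<forall>j. jacobian (weierstrass ([:-\<alpha>, 1:] * p)) (at z) $ None $ Some j = 0) \<and>
       jacobian (weierstrass ([:-\<alpha>, 1:] * p)) (at z) $ None $ None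
         = 1 - poly p \<alpha> / (\<Prod>j\<in>UNIV. \<alpha> - z $ Some j))
    \<and>
    (\<forall>(q::complex^'n) n.
       periodic_point p q n \<and>
       (\<forall>\<mu>. is_eigenvalue (jacobian (weierstrass p ^^ n) (at q)) \<mu> \<longrightarrow> norm \<mu> < 1)
       \<longrightarrow> (\<exists>R. \<forall>\<alpha>::complex. norm \<alpha> > R \<longrightarrow>
              periodic_point ([:-\<alpha>, 1:] * p) (extend_pt q \<alpha>) n \<and>
              (weierstrass ([:-\<alpha>, 1:] * p) ^^ n) differentiable (at (extend_pt q \<alpha>)) \<and>
              (\<forall>\<mu>. is_eigenvalue (jacobian (weierstrass ([:-\<alpha>, 1:] * p) ^^ n)
                                     (at (extend_pt q \<alpha>))) \<mu> \<longrightarrow> norm \<mu> < 1)))"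
proof -
  have bounded_away: "\<exists>R. \<forall>\<alpha>::complex. R < norm \<alpha> \<longrightarrow> P \<alpha>" if "eventually P at_infinity" for P
    using that unfolding eventually_at_infinity by (meson less_imp_le)
  show ?thesis
    using jacobian_weierstrass_linear_factor
      bounded_away[OF eventually_attracting_periodic_point_extend_pt[OF monic deg]]
    by blast
qed

end
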